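(* Let $\mathcal{E}=[\theta,u]$ be an interval effect algebra that generates its ordered linear space, has an order-determining set of states, and is unrestricted. Let $\mathcal{I}$ be an operation from $\mathcal{E}$ to $\mathcal{E}$ and $a\in\mathcal{E}$ with $\mathcal{I}^*(u)=a$. Then the following are equivalent: (i) $a$ is $\mathcal{I}$-repeatable, i.e. $\mathcal{I}^*(a)=a$; (ii) $a[\mathcal{I}]a=a$; (iii) $a[\mathcal{I}]a'=\theta$; (iv) $a[\mathcal{I}]b=\theta$ for every $b\in\mathcal{E}$ with $a\perp b$; (v) $\mathcal{I}^*(b)\le\mathcal{I}^*(a)$ for all $b\in\mathcal{E}$; (vi) $\mathcal{I}(\mathcal{I}(s))(u)=\mathcal{I}(s)(u)$ for all $s\in\mathcal{S}(\mathcal{E})$, and $\mathcal{I}^*(u)=a$.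
   Context: Let $V$ be a real vector space with zero $\theta$ and $K\subseteq V$ a positive cone ($\mathbb{R}^+K\subseteq K$, $K+K\subseteq K$, $K\cap(-K)=\{\theta\}$), ordered by $x\le y$ iff $y-x\in K$. For $u\in K$, $u\ne\theta$, $\mathcal{E}=[\theta,u]=\{x\in K:x\le u\}$; for $a,b\in\mathcal{E}$, $a\perp b$ means $a+b\le u$; the complement of $a$ is $a'=u-a$. $\mathcal{E}$ generates $V$ means $K=\mathbb{R}^+\mathcal{E}$ and $V=K-K$. A state is $s\colon\mathcal{E}\to[0,1]$ with $s(u)=1$ and $s(a+b)=s(a)+s(b)$ whenever $a\perp b$; $\mathcal{S}(\mathcal{E})$ is the set of all states, assumed order-determining: $a\le b$ iff $s(a)\le s(b)$ for all $s$. Affine = preserves finite convex combinations. Unrestricted: every affine $f\colon\mathcal{S}(\mathcal{E})\to[0,1]$ is of the form $f(s)=s(c)$ for some $c\in\mathcal{E}$. A substate is $\lambda s$, $\lambda\in[0,1]$, $s\in\mathcal{S}(\mathcal{E})$. An operation on $\mathcal{E}$ is an affine map $\mathcal{I}$ from $\mathcal{S}(\mathcal{E})$ to substates on $\mathcal{E}$; it is extended to substates by $\mathcal{I}(\lambda s)=\lambda\mathcal{I}(s)$. Its dual $\mathcal{I}^*\colon\mathcal{E}\to\mathcal{E}$ is the unique affine map with $s[\mathcal{I}^*(b)]=\mathcal{I}(s)(b)$ for all $s\in\mathcal{S}(\mathcal{E})$, $b\in\mathcal{E}$. When $\mathcal{I}^*(u)=a$ ($\mathcal{I}$ measures $a$),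 the sequential product relative to $\mathcal{I}$ is $a[\mathcal{I}]b=\mathcal{I}^*(b)$ for $b\in\mathcal{E}$. *)

theory Defs
  imports Main "HOL.Real_Vector_Spaces"
begin

text \<open>Ordered real vector space (V = the whole type 'v) with positive cone K.\<close>

definition pos_cone :: "'v::real_vector set \<Rightarrow> bool" where
  "pos_cone K \<longleftrightarrow> (\<forall>r x. r \<ge> 0 \<longrightarrow> x \<in> K \<longrightarrow> r *\<^sub>R x \<in> K)
     \<and> (\<forall>x\<in>K. \<forall>y\<in>K. x + y \<in> K)
     \<and> K \<inter> uminus ` K = {0}"

definition cone_le :: "'v::real_vector set \<Rightarrow> 'v \<Rightarrow> 'v \<Rightarrow> bool" where
  "cone_le K x y \<longleftrightarrow> y - x \<in> K"

definition EA :: "'v::real_vector set \<Rightarrow> 'v \<Rightarrow> 'v set" where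
  "EA K u = {x \<in> K. cone_le K x u}"

definition perp :: "'v::real_vector set \<Rightarrow> 'v \<Rightarrow> 'v \<Rightarrow> 'v \<Rightarrow> bool" where
  "perp K u a b \<longleftrightarrow> cone_le K (a + b) u"

definition compl :: "'v::real_vector \<Rightarrow> 'v \<Rightarrow> 'v" where
  "compl u a = u - a"

definition generates :: "'v::real_vector set \<Rightarrow> 'v \<Rightarrow> bool" where
  "generates K u \<longleftrightarrow> K = {r *\<^sub>R x | r x. r \<ge> 0 \<and> x \<in> EA K u}
     \<and> (UNIV :: 'v set) = {x - y | x y. x \<in> K \<and> y \<in> K}"

text \<open>States: functions on E (extended by 0 outside E).\<close>
definition is_state :: "'v::real_vector set \<Rightarrow> 'v \<Rightarrow> ('v \<Rightarrow> real) \<Rightarrow> bool" where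
  "is_state K u s \<longleftrightarrow> (\<forall>x. x \<notin> EA K u \<longrightarrow> s x = 0)
     \<and> (\<forall>x\<in>EA K u. 0 \<le> s x \<and> s x \<le> 1)
     \<and> s u = 1
     \<and> (\<forall>a\<in>EA K u. \<forall>b\<in>EA K u. perp K u a b \<longrightarrow> s (a + b) = s a + s b)"

definition States :: "'v::real_vector set \<Rightarrow> 'v \<Rightarrow> ('v \<Rightarrow> real) set" where
  "States K u = {s. is_state K u s}"

definition order_determining :: "'v::real_vector set \<Rightarrow> 'v \<Rightarrow> bool" where
  "order_determining K u \<longleftrightarrow> (\<forall>a\<in>EA K u. \<forall>b\<in>EA K u.
      cone_le K a b \<longleftrightarrow> (\<forall>s\<in>States K u. s a \<le> s b))"

definition substates :: "'v::real_vector set \<Rightarrow> 'v \<Rightarrow> ('v \<Rightarrow> real) set" where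
  "substates K u = {(\<lambda>x. l * s x) | l s. 0 \<le> l \<and> l \<le> 1 \<and> s \<in> States K u}"

text \<open>Affine = preserves convex combinations (binary ones; for maps on the convex
  set of states this is equivalent to preserving all finite convex combinations).\<close>
definition affine_real_on_states :: "'v::real_vector set \<Rightarrow> 'v \<Rightarrow> (('v \<Rightarrow> real) \<Rightarrow> real) \<Rightarrow> bool" where
  "affine_real_on_states K u f \<longleftrightarrow> (\<forall>s\<in>States K u. \<forall>t\<in>States K u. \<forall>l::real. 0 \<le> l \<longrightarrow> l \<le> 1 \<longrightarrow>
      f (\<lambda>x. l * s x + (1 - l) * t x) = l * f s + (1 - l) * f t)"

definition unrestricted :: "'v::real_vector set \<Rightarrow> 'v \<Rightarrow> bool" where
  "unrestricted K u \<longleftrightarrow> (\<forall>f. affine_real_on_states K u f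
       \<longrightarrow> (\<forall>s\<in>States K u. 0 \<le> f s \<and> f s \<le> 1)
       \<longrightarrow> (\<exists>c\<in>EA K u. \<forall>s\<in>States K u. f s = s c))"

definition is_operation :: "'v::real_vector set \<Rightarrow> 'v \<Rightarrow> (('v \<Rightarrow> real) \<Rightarrow> ('v \<Rightarrow> real)) \<Rightarrow> bool" where
  "is_operation K u I \<longleftrightarrow> (\<forall>s\<in>States K u. I s \<in> substates K u)
     \<and> (\<forall>s\<in>States K u. \<forall>t\<in>States K u. \<forall>l::real. 0 \<le> l \<longrightarrow> l \<le> 1 \<longrightarrow>
          I (\<lambda>x. l * s x + (1 - l) * t x) = (\<lambda>x. l * I s x + (1 - l) * I t x))"

text \<open>Extension of an operation to substates: I(l s) = l I(s). For a substate f = l s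
  one has l = f u, and s = f / f u when l > 0.\<close>
definition op_ext :: "'v::real_vector \<Rightarrow> (('v \<Rightarrow> real) \<Rightarrow> ('v \<Rightarrow> real)) \<Rightarrow> ('v \<Rightarrow> real) \<Rightarrow> ('v \<Rightarrow> real)" where
  "op_ext u I f = (if f u = 0 then (\<lambda>_. 0) else (\<lambda>b. f u * I (\<lambda>x. f x / f u) b))"

text \<open>The dual I*: I*(b) is the (unique, by order-determination) c in E with s(c) = I(s)(b).\<close>
definition op_dual :: "'v::real_vector set \<Rightarrow> 'v \<Rightarrow> (('v \<Rightarrow> real) \<Rightarrow> ('v \<Rightarrow> real)) \<Rightarrow> 'v \<Rightarrow> 'v" where
  "op_dual K u I b = (THE c. c \<in> EA K u \<and> (\<forall>s\<in>States K u. s c = I s b))"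

text \<open>Sequential product a[I]b = I*(b) (meaningful when I*(u) = a).\<close>
definition seq_prod :: "'v::real_vector set \<Rightarrow> 'v \<Rightarrow> 'v \<Rightarrow> (('v \<Rightarrow> real) \<Rightarrow> ('v \<Rightarrow> real)) \<Rightarrow> 'v \<Rightarrow> 'v" where
  "seq_prod K u a I b = op_dual K u I b"

end

theory Submission
  imports Defs
begin

text \<open>Unrestrictedness makes the dual \<open>\<I>\<^sup>*\<close> well defined, and order-determination lets every
  claim about effects be checked state by state. Writing \<open>a = \<I>\<^sup>*(u)\<close>, repeatability
  \<open>\<I>\<^sup>*(a) = a\<close> then says \<open>\<I>(s)(a) = s(a) = \<I>(s)(u)\<close> for every state \<open>s\<close>; by additivity of
  the substate \<open>\<I>(s)\<close> this is \<open>\<I>(s)(a') = 0\<close>, and by its monotonicity it is equivalent both to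
  \<open>\<I>(s)\<close> vanishing on everything orthogonal to \<open>a\<close> (such \<open>b\<close> satisfy \<open>b \<le> a'\<close>) and to
  \<open>\<I>(s)(a)\<close> being the maximum \<open>\<I>(s)(u)\<close> of \<open>\<I>(s)\<close>. Finally \<open>\<I>(\<I>(s))(u) = \<I>(s)(a)\<close>, because
  the extension of \<open>\<I>\<close> to substates is homogeneous.\<close>

lemma pos_cone_zero: "pos_cone K \<Longrightarrow> 0 \<in> K"
  unfolding pos_cone_def by blast

lemma pos_cone_add: "pos_cone K \<Longrightarrow> x \<in> K \<Longrightarrow> y \<in> K \<Longrightarrow> x + y \<in> K"
  unfolding pos_cone_def by blast

lemma pos_cone_antisym:
  assumes "pos_cone K" "x \<in> K" "- x \<in> K"
  shows "x = 0"
proof -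
  have "x \<in> K \<inter> uminus ` K"
    using assms(2,3) image_eqI[of x uminus "- x" K] by simp
  with assms(1) show ?thesis
    unfolding pos_cone_def by simp
qed

locale interval_effect_algebra =
  fixes K :: "'v::real_vector set" and u :: 'v
  assumes pos_cone: "pos_cone K" and unit_in_cone: "u \<in> K"
begin

lemma unit_in_EA: "u \<in> EA K u"
  using unit_in_cone pos_cone_zero[OF pos_cone] by (simp add: EA_def cone_le_def)

lemma zero_in_EA: "0 \<in> EA K u"
  using unit_in_cone pos_cone_zero[OF pos_cone] by (simp add: EA_def cone_le_def)

lemma compl_in_EA: "a \<in> EA K u \<Longrightarrow> u - a \<in> EA K u"
  by (simp add: EA_def cone_le_def)

lemma perp_compl: "perp K u a (u - a)"
  using pos_cone_zero[OF pos_cone] by (simp add: perp_def cone_le_def)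

lemma perp_imp_le_compl: "perp K u a b \<Longrightarrow> cone_le K b (u - a)"
  by (simp add: perp_def cone_le_def algebra_simps)

lemma le_imp_perp_diff:
  assumes "b \<in> EA K u" "c \<in> EA K u" "cone_le K b c"
  shows "c - b \<in> EA K u" and "perp K u b (c - b)"
proof -
  have "u - c + b \<in> K"
    using assms(1,2) pos_cone_add[OF pos_cone] by (simp add: EA_def cone_le_def)
  then show "c - b \<in> EA K u"
    using assms(3) by (simp add: EA_def cone_le_def algebra_simps)
  show "perp K u b (c - b)"
    using assms(2) by (simp add: perp_def EA_def)
qed

lemma state_range: "s \<in> States K u \<Longrightarrow> x \<in> EA K u \<Longrightarrow> 0 \<le> s x \<and> s x \<le> 1"
  unfolding States_def is_state_def by blast

lemma state_unit: "s \<in> States K u \<Longrightarrow> s u = 1"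
  unfolding States_def is_state_def by blast

lemma state_add:
  "s \<in> States K u \<Longrightarrow> a \<in> EA K u \<Longrightarrow> b \<in> EA K u \<Longrightarrow> perp K u a b \<Longrightarrow> s (a + b) = s a + s b"
  unfolding States_def is_state_def by blast

lemma state_zero: "s \<in> States K u \<Longrightarrow> s 0 = 0"
  using state_add[of s 0 0] zero_in_EA unit_in_cone by (simp add: perp_def cone_le_def)

lemma substateE:
  assumes "f \<in> substates K u"
  obtains l s where "0 \<le> l" "l \<le> 1" "s \<in> States K u" "f = (\<lambda>x. l * s x)"
  using assms unfolding substates_def by blast

lemma substate_range:
  assumes "f \<in> substates K u" "x \<in> EA K u"
  shows "0 \<le> f x \<and> f x \<le> 1"
proof -
  obtain l s where "0 \<le> l" "l \<le> 1" "s \<in> States K u" "f = (\<lambda>x. l * s x)"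
    using substateE[OF assms(1)] .
  then show ?thesis
    using state_range[of s x] assms(2) by (simp add: mult_le_one)
qed

lemma substate_add:
  assumes "f \<in> substates K u" "a \<in> EA K u" "b \<in> EA K u" "perp K u a b"
  shows "f (a + b) = f a + f b"
proof -
  obtain l s where "s \<in> States K u" "f = (\<lambda>x. l * s x)"
    using substateE[OF assms(1)] by metis
  then show ?thesis
    using state_add[of s a b] assms(2-4) by (simp add: algebra_simps)
qed

lemma substate_mono:
  assumes "f \<in> substates K u" "b \<in> EA K u" "c \<in> EA K u" "cone_le K b c"
  shows "f b \<le> f c"
proof -
  note diff = le_imp_perp_diff[OF assms(2-4)]
  have "f c = f b + f (c - b)"
    using substate_add[OF assms(1,2) diff] by simp
  then show ?thesis
    using substate_range[OF assms(1) diff(1)] by simp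
qed

end

locale order_determined_effect_algebra = interval_effect_algebra +
  assumes order_determining: "order_determining K u"
begin

lemma cone_le_iff_states:
  "a \<in> EA K u \<Longrightarrow> b \<in> EA K u \<Longrightarrow> cone_le K a b \<longleftrightarrow> (\<forall>s\<in>States K u. s a \<le> s b)"
  using order_determining unfolding order_determining_def by blast

lemma eq_if_states_eq:
  assumes "c \<in> EA K u" "d \<in> EA K u" "\<And>s. s \<in> States K u \<Longrightarrow> s c = s d"
  shows "c = d"
proof -
  have "cone_le K c d" "cone_le K d c"
    using assms(1,2) by (simp_all add: cone_le_iff_states assms(3))
  then have "d - c \<in> K" "- (d - c) \<in> K"
    by (simp_all add: cone_le_def)
  then show ?thesis
    using pos_cone_antisym[OF pos_cone] by fastforce
qed

end

locale effect_operation = order_determined_effect_algebra K u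
  for K :: "'v::real_vector set" and u +
  fixes I :: "('v \<Rightarrow> real) \<Rightarrow> ('v \<Rightarrow> real)"
  assumes unrestricted: "unrestricted K u" and operation: "is_operation K u I"
begin

lemma operation_substate: "s \<in> States K u \<Longrightarrow> I s \<in> substates K u"
  using operation unfolding is_operation_def by blast

lemma op_dual_spec:
  assumes "b \<in> EA K u"
  shows "op_dual K u I b \<in> EA K u \<and> (\<forall>s\<in>States K u. s (op_dual K u I b) = I s b)"
proof -
  have "affine_real_on_states K u (\<lambda>s. I s b)"
    using operation unfolding affine_real_on_states_def is_operation_def by simp
  moreover have "\<forall>s\<in>States K u. 0 \<le> I s b \<and> I s b \<le> 1"
    using substate_range[OF operation_substate assms] by blast
  ultimately obtain c where c: "c \<in> EA K u" "\<forall>s\<in>States K u. I s b = s c"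
    using unrestricted unfolding unrestricted_def by blast
  have "\<exists>!c. c \<in> EA K u \<and> (\<forall>s\<in>States K u. s c = I s b)"
  proof (rule ex1I[of _ c])
    fix d assume "d \<in> EA K u \<and> (\<forall>s\<in>States K u. s d = I s b)"
    then show "d = c"
      using eq_if_states_eq[of d c] c by simp
  qed (use c in simp)
  then show ?thesis
    unfolding op_dual_def by (rule theI')
qed

lemma op_dual_in_EA: "b \<in> EA K u \<Longrightarrow> op_dual K u I b \<in> EA K u"
  using op_dual_spec by blast

lemma state_op_dual: "b \<in> EA K u \<Longrightarrow> s \<in> States K u \<Longrightarrow> s (op_dual K u I b) = I s b"
  using op_dual_spec by blast

lemma op_dual_eqI:
  assumes "b \<in> EA K u" "c \<in> EA K u" "\<And>s. s \<in> States K u \<Longrightarrow> s c = I s b"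
  shows "op_dual K u I b = c"
  by (rule eq_if_states_eq[OF op_dual_in_EA[OF assms(1)] assms(2)])
    (simp add: assms(3) state_op_dual[OF assms(1)])

lemma op_dual_eq_zero_iff:
  assumes "b \<in> EA K u"
  shows "op_dual K u I b = 0 \<longleftrightarrow> (\<forall>s\<in>States K u. I s b = 0)"
proof
  assume "op_dual K u I b = 0"
  then show "\<forall>s\<in>States K u. I s b = 0"
    by (simp add: state_op_dual[OF assms, symmetric] state_zero)
next
  assume "\<forall>s\<in>States K u. I s b = 0"
  then show "op_dual K u I b = 0"
    by (intro op_dual_eqI[OF assms zero_in_EA]) (simp add: state_zero)
qed

lemma op_dual_le_iff:
  "b \<in> EA K u \<Longrightarrow> c \<in> EA K u \<Longrightarrow>
    cone_le K (op_dual K u I b) (op_dual K u I c) \<longleftrightarrow> (\<forall>s\<in>States K u. I s b \<le> I s c)"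
  by (simp add: cone_le_iff_states op_dual_in_EA state_op_dual)

lemma op_ext_operation_unit:
  assumes "s \<in> States K u"
  shows "op_ext u I (I s) u = I s (op_dual K u I u)"
proof -
  obtain l t where lt: "t \<in> States K u" "I s = (\<lambda>x. l * t x)"
    using substateE[OF operation_substate[OF assms]] by metis
  have "(\<lambda>x. l * t x / (l * t u)) = t" if "l \<noteq> 0"
    using that state_unit[OF lt(1)] by auto
  then show ?thesis
    using lt state_unit[OF lt(1)] state_op_dual[OF unit_in_EA lt(1)]
    by (simp add: op_ext_def)
qed

context
  fixes a :: 'v
  assumes a_in_EA: "a \<in> EA K u" and measures_a: "op_dual K u I u = a"
begin

lemma operation_unit: "s \<in> States K u \<Longrightarrow> I s u = s a"
  using state_op_dual[OF unit_in_EA] measures_a by simp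

lemma repeatable_iff_states: "op_dual K u I a = a \<longleftrightarrow> (\<forall>s\<in>States K u. I s a = s a)"
proof
  assume "op_dual K u I a = a"
  then show "\<forall>s\<in>States K u. I s a = s a"
    by (simp add: state_op_dual[OF a_in_EA, symmetric])
next
  assume "\<forall>s\<in>States K u. I s a = s a"
  then show "op_dual K u I a = a"
    by (intro op_dual_eqI[OF a_in_EA a_in_EA]) simp
qed

lemma repeatable_iff_compl_zero: "op_dual K u I a = a \<longleftrightarrow> op_dual K u I (u - a) = 0"
proof -
  have "I s a = s a \<longleftrightarrow> I s (u - a) = 0" if "s \<in> States K u" for s
    using substate_add[OF operation_substate[OF that] a_in_EA compl_in_EA[OF a_in_EA] perp_compl]
      operation_unit[OF that]
    by simp
  then show ?thesis
    by (simp add: repeatable_iff_states op_dual_eq_zero_iff[OF compl_in_EA[OF a_in_EA]])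
qed

lemma compl_zero_iff_perp_zero:
  "op_dual K u I (u - a) = 0 \<longleftrightarrow> (\<forall>b\<in>EA K u. perp K u a b \<longrightarrow> op_dual K u I b = 0)"
proof
  assume "op_dual K u I (u - a) = 0"
  then have compl_zero: "I s (u - a) = 0" if "s \<in> States K u" for s
    using that op_dual_eq_zero_iff[OF compl_in_EA[OF a_in_EA]] by blast
  show "\<forall>b\<in>EA K u. perp K u a b \<longrightarrow> op_dual K u I b = 0"
  proof (intro ballI impI)
    fix b assume b: "b \<in> EA K u" "perp K u a b"
    have "I s b = 0" if "s \<in> States K u" for s
      using substate_mono[OF operation_substate[OF that] b(1) compl_in_EA[OF a_in_EA]
          perp_imp_le_compl[OF b(2)]]
        substate_range[OF operation_substate[OF that] b(1)] compl_zero[OF that]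
      by linarith
    then show "op_dual K u I b = 0"
      using op_dual_eq_zero_iff[OF b(1)] by blast
  qed
next
  assume "\<forall>b\<in>EA K u. perp K u a b \<longrightarrow> op_dual K u I b = 0"
  then show "op_dual K u I (u - a) = 0"
    using compl_in_EA[OF a_in_EA] perp_compl by blast
qed

lemma repeatable_iff_dual_le:
  "op_dual K u I a = a \<longleftrightarrow> (\<forall>b\<in>EA K u. cone_le K (op_dual K u I b) (op_dual K u I a))"
proof -
  have op_le_unit: "I s b \<le> I s u" if "s \<in> States K u" "b \<in> EA K u" for s b
    using substate_mono[OF operation_substate[OF that(1)] that(2) unit_in_EA] that(2)
    by (simp add: EA_def)
  have "(\<forall>b\<in>EA K u. \<forall>s\<in>States K u. I s b \<le> I s a) \<longleftrightarrow> (\<forall>s\<in>States K u. I s u \<le> I s a)"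
    using unit_in_EA op_le_unit by (meson order_trans)
  also have "\<dots> \<longleftrightarrow> (\<forall>s\<in>States K u. I s a = s a)"
    using op_le_unit[OF _ a_in_EA] by (auto simp: operation_unit intro: antisym)
  finally show ?thesis
    by (simp add: op_dual_le_iff a_in_EA repeatable_iff_states)
qed

lemma repeatable_iff_op_ext_unit:
  "op_dual K u I a = a \<longleftrightarrow> (\<forall>s\<in>States K u. op_ext u I (I s) u = I s u)"
  by (simp add: repeatable_iff_states op_ext_operation_unit measures_a operation_unit)

end

end

theorem theorem3p3:
  fixes K :: "'v::real_vector set" and u a :: 'v
    and I :: "('v \<Rightarrow> real) \<Rightarrow> ('v \<Rightarrow> real)"
  assumes "pos_cone K" and "u \<in> K" and "u \<noteq> 0"
    and "generates K u" and "order_determining K u" and "unrestricted K u"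
    and "is_operation K u I"
    and "a \<in> EA K u" and "op_dual K u I u = a"
  shows "(op_dual K u I a = a \<longleftrightarrow> seq_prod K u a I a = a)
       \<and> (op_dual K u I a = a \<longleftrightarrow> seq_prod K u a I (compl u a) = 0)
       \<and> (op_dual K u I a = a \<longleftrightarrow>
            (\<forall>b\<in>EA K u. perp K u a b \<longrightarrow> seq_prod K u a I b = 0))
       \<and> (op_dual K u I a = a \<longleftrightarrow>
            (\<forall>b\<in>EA K u. cone_le K (op_dual K u I b) (op_dual K u I a)))
       \<and> (op_dual K u I a = a \<longleftrightarrow>
            ((\<forall>s\<in>States K u. op_ext u I (I s) u = I s u) \<and> op_dual K u I u = a))"
proof -
  interpret effect_operation K u I
    using assms by unfold_locales
  note equivalences = repeatable_iff_compl_zero compl_zero_iff_perp_zero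
    repeatable_iff_dual_le repeatable_iff_op_ext_unit
  show ?thesis
    unfolding seq_prod_def compl_def
    using equivalences[OF assms(8,9)] assms(9) by simp
qed

end
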